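(* Let $|\cdot|$ denote the Euclidean norm on $\mathbb{R}^n$. Let $l_0,l_1,\bar l_0,\bar l_1\in\mathbb{R}^n$ satisfy $$|l_1-\bar l_0|\ge |l_1-l_0|,\qquad |\bar l_1-l_0|\ge |\bar l_1-\bar l_0|,$$ and $|l_1-l_0|=|\bar l_1-\bar l_0|$. For $t\in[0,1]$ write $l_t=(1-t)l_0+tl_1$ and $\bar l_t=(1-t)\bar l_0+t\bar l_1$. Then $$|l_1-\bar l_1|\le \frac{2}{t}\,|l_s-\bar l_t|\qquad\text{for all } 0<t\le s\le 1.$$ *)

theory Defs
  imports "HOL-Analysis.Analysis"
begin

end

theory Submission
  imports Defs
begin

text \<open>Put \<open>w = l1 - lb1\<close>, \<open>u = l1 - l0\<close>, \<open>v = lb1 - lb0\<close>. Since \<open>norm u = norm v\<close>,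
  the two hypotheses say \<open>2 (w \<bullet> u) \<le> w \<bullet> w\<close> and \<open>-2 (w \<bullet> v) \<le> w \<bullet> w\<close>. The difference
  of the interpolants is \<open>w - (1 - s) u + (1 - t) v\<close>, so its inner product with \<open>w\<close> is at
  least \<open>(s + t)/2 (w \<bullet> w) \<ge> t (w \<bullet> w)\<close>, and Cauchy--Schwarz gives
  \<open>t norm w \<le> norm (l_s - lb_t)\<close>: the claim even holds with \<open>1/t\<close> in place of \<open>2/t\<close>,
  in any real inner product space.\<close>

lemma inner_nonneg_of_norm_le_norm_add:
  fixes v w :: "'a::real_inner"
  assumes "norm v \<le> norm (w + v)"
  shows "0 \<le> w \<bullet> w + 2 * (w \<bullet> v)"
proof -
  have "norm v ^ 2 \<le> norm (w + v) ^ 2"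
    using assms by (simp add: power_mono)
  then show ?thesis
    by (simp add: power2_norm_eq_inner inner_simps inner_commute)
qed

lemma norm_le_of_inner_ge:
  fixes w x :: "'a::real_inner"
  assumes "t * (w \<bullet> w) \<le> w \<bullet> x"
  shows "t * norm w \<le> norm x"
proof (cases "w = 0")
  case False
  have "t * norm w * norm w \<le> norm x * norm w"
    using assms Cauchy_Schwarz_ineq2[of w x]
    by (simp add: power2_norm_eq_inner[symmetric] power2_eq_square algebra_simps)
  then show ?thesis
    using False by simp
qed simp

theorem norm_diff_endpoints_le_interpolants:
  fixes l0 l1 lb0 lb1 :: "'a::real_inner"
  assumes "norm (l1 - lb0) \<ge> norm (l1 - l0)"
    and "norm (lb1 - l0) \<ge> norm (lb1 - lb0)"
    and "norm (l1 - l0) = norm (lb1 - lb0)"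
    and "0 < t" "t \<le> s" "s \<le> 1"
  shows "t * norm (l1 - lb1) \<le>
    norm (((1 - s) *\<^sub>R l0 + s *\<^sub>R l1) - ((1 - t) *\<^sub>R lb0 + t *\<^sub>R lb1))"
proof -
  define u where "u = l1 - l0"
  define v where "v = lb1 - lb0"
  define w where "w = l1 - lb1"
  have hv: "0 \<le> w \<bullet> w + 2 * (w \<bullet> v)"
    using assms(1,3) by (intro inner_nonneg_of_norm_le_norm_add) (simp add: u_def v_def w_def)
  have "0 \<le> (- w) \<bullet> (- w) + 2 * ((- w) \<bullet> u)"
    using assms(2,3) by (intro inner_nonneg_of_norm_le_norm_add) (simp add: u_def v_def w_def)
  then have hu: "0 \<le> w \<bullet> w - 2 * (w \<bullet> u)"
    by simp
  have "(1 - s) * (w \<bullet> u) \<le> (1 - s) * (w \<bullet> w / 2)"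
    using assms(6) hu by (intro mult_left_mono) auto
  moreover have "(1 - t) * (- (w \<bullet> w) / 2) \<le> (1 - t) * (w \<bullet> v)"
    using assms(5,6) hv by (intro mult_left_mono) auto
  moreover have "t * (w \<bullet> w) \<le> (s + t) / 2 * (w \<bullet> w)"
    using assms(5) by (intro mult_right_mono) auto
  moreover have "(s + t) / 2 * (w \<bullet> w) =
      w \<bullet> w - (1 - s) * (w \<bullet> w / 2) + (1 - t) * (- (w \<bullet> w) / 2)"
    by (simp add: field_simps)
  moreover have "w \<bullet> (w - (1 - s) *\<^sub>R u + (1 - t) *\<^sub>R v) =
      w \<bullet> w - (1 - s) * (w \<bullet> u) + (1 - t) * (w \<bullet> v)"
    by (simp add: inner_simps)
  ultimately have "t * (w \<bullet> w) \<le> w \<bullet> (w - (1 - s) *\<^sub>R u + (1 - t) *\<^sub>R v)"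
    by linarith
  moreover have "w - (1 - s) *\<^sub>R u + (1 - t) *\<^sub>R v =
      ((1 - s) *\<^sub>R l0 + s *\<^sub>R l1) - ((1 - t) *\<^sub>R lb0 + t *\<^sub>R lb1)"
    by (simp add: u_def v_def w_def algebra_simps)
  ultimately show ?thesis
    using norm_le_of_inner_ge unfolding w_def by metis
qed

theorem corollary3p3:
  fixes l0 l1 lb0 lb1 :: "real ^ 'n"
  assumes "norm (l1 - lb0) \<ge> norm (l1 - l0)"
    and "norm (lb1 - l0) \<ge> norm (lb1 - lb0)"
    and "norm (l1 - l0) = norm (lb1 - lb0)"
  shows "\<forall>t s. 0 < t \<and> t \<le> s \<and> s \<le> 1 \<longrightarrow>
    norm (l1 - lb1) \<le> (2 / t) *
      norm (((1 - s) *\<^sub>R l0 + s *\<^sub>R l1) - ((1 - t) *\<^sub>R lb0 + t *\<^sub>R lb1))"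
proof (intro allI impI)
  fix t s :: real
  let ?d = "norm (((1 - s) *\<^sub>R l0 + s *\<^sub>R l1) - ((1 - t) *\<^sub>R lb0 + t *\<^sub>R lb1))"
  assume ts: "0 < t \<and> t \<le> s \<and> s \<le> 1"
  then have "t * norm (l1 - lb1) \<le> ?d"
    using assms by (intro norm_diff_endpoints_le_interpolants) auto
  then have "norm (l1 - lb1) \<le> ?d / t"
    using ts by (simp add: field_simps)
  also have "\<dots> \<le> (2 / t) * ?d"
    using ts by (simp add: field_simps)
  finally show "norm (l1 - lb1) \<le> (2 / t) * ?d" .
qed

end
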